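(* Let $k\ge 3$ be an integer and $1/2<q<1$. Let $f:[1/k,1]\to\mathbb R$ be given by $$f(x) = x^q(k-2+x)^{(k-1)q} + (k-1)(1-x)^{2q}(k-2+x)^{(k-2)q}.$$ Then $f$ attains its maximum on $[1/k,1]$ at $x=1/k$ or at $x=1$. *)

theory Defs
  imports Complex_Main
begin

definition f45 :: "nat \<Rightarrow> real \<Rightarrow> real \<Rightarrow> real" where
  "f45 k q x = x powr q * (real k - 2 + x) powr (real (k - 1) * q)
     + real (k - 1) * (1 - x) powr (2 * q) * (real k - 2 + x) powr (real (k - 2) * q)"

end

theory Submission
  imports Defs
begin

text \<open>
  Write \<open>m = k - 2\<close>. The derivative of \<open>f\<close> is a positive factor times
  \<open>x powr (q - 1) * (m + x) powr q - (m + 1) * (1 - x) powr (2 * q - 1)\<close>, so its sign is that of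
  \<open>L x - ln (m + 1)\<close> with \<open>L x = crit_log m q x = (q - 1) ln x + q ln (m + x) - (2 q - 1) ln (1 - x)\<close>.
  Because \<open>L'\<close> is a positive multiple of a linear function of positive slope (here \<open>q > 1/2\<close>
  is used), \<open>L\<close> first decreases and then increases, and \<open>L (1/k) = ln (m + 1)\<close>. At an interior
  maximum \<open>c\<close> of \<open>f\<close> we get \<open>L c = ln (m + 1)\<close>, hence \<open>L \<le> ln (m + 1)\<close> on \<open>[1/k, c]\<close>;
  so \<open>f\<close> does not increase there and \<open>f (1/k)\<close> is maximal as well.
\<close>

lemma max_at_endpoint_if_interior_max_le_left:
  fixes F :: "real \<Rightarrow> real"
  assumes "a \<le> b" and "continuous_on {a..b} F"
    and "\<And>c. a < c \<Longrightarrow> c < b \<Longrightarrow> (\<forall>y\<in>{a..b}. F y \<le> F c) \<Longrightarrow> F c \<le> F a"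
  shows "(\<forall>x\<in>{a..b}. F x \<le> F a) \<or> (\<forall>x\<in>{a..b}. F x \<le> F b)"
proof -
  obtain c where c: "c \<in> {a..b}" and max: "\<forall>y\<in>{a..b}. F y \<le> F c"
    using continuous_attains_sup[OF _ _ assms(2)] assms(1) by auto
  consider "c = a" | "c = b" | "a < c" "c < b"
    using c by fastforce
  then show ?thesis
  proof cases
    case 3
    then have "F c \<le> F a" using assms(3) max by blast
    then show ?thesis using max by force
  qed (use max in auto)
qed

lemma le_max_if_deriv_eq_pos_mult_mono:
  fixes L s w :: "real \<Rightarrow> real"
  assumes "a \<le> y" "y \<le> c"
    and deriv: "\<And>x. a \<le> x \<Longrightarrow> x \<le> c \<Longrightarrow> (L has_real_derivative s x * w x) (at x)"
    and w_pos: "\<And>x. a \<le> x \<Longrightarrow> x \<le> c \<Longrightarrow> w x > 0"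
    and "mono_on {a..c} s"
  shows "L y \<le> max (L a) (L c)"
proof (cases "s y \<le> 0")
  case True
  have "L y \<le> L a"
  proof (rule DERIV_nonpos_imp_nonincreasing[OF \<open>a \<le> y\<close>])
    fix x assume "a \<le> x" "x \<le> y"
    then have "s x \<le> 0"
      using True \<open>y \<le> c\<close> mono_onD[OF \<open>mono_on {a..c} s\<close>, of x y] by auto
    then show "\<exists>d. (L has_real_derivative d) (at x) \<and> d \<le> 0"
      using deriv w_pos \<open>a \<le> x\<close> \<open>x \<le> y\<close> \<open>y \<le> c\<close>
      by (meson mult_nonpos_nonneg less_imp_le order_trans)
  qed
  then show ?thesis by simp
next
  case False
  have "L y \<le> L c"
  proof (rule DERIV_nonneg_imp_nondecreasing[OF \<open>y \<le> c\<close>])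
    fix x assume "y \<le> x" "x \<le> c"
    then have "s x \<ge> 0"
      using False \<open>a \<le> y\<close> mono_onD[OF \<open>mono_on {a..c} s\<close>, of y x] by auto
    then show "\<exists>d. (L has_real_derivative d) (at x) \<and> d \<ge> 0"
      using deriv w_pos \<open>a \<le> y\<close> \<open>y \<le> x\<close> \<open>x \<le> c\<close>
      by (meson zero_le_mult_iff less_imp_le order_trans)
  qed
  then show ?thesis by simp
qed

lemma sgn_diff_eq_sgn_ln_diff:
  fixes u v :: real
  assumes "0 < u" "0 < v"
  shows "sgn (u - v) = sgn (ln u - ln v)"
  using assms by (cases u v rule: linorder_cases) auto

text \<open>\<open>f45 k = f45m (k - 2)\<close>; the real parameter \<open>m\<close> avoids truncated subtraction.\<close>

definition f45m :: "real \<Rightarrow> real \<Rightarrow> real \<Rightarrow> real" where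
  "f45m m q x = x powr q * (m + x) powr ((m + 1) * q) + (m + 1) * (1 - x) powr (2 * q) * (m + x) powr (m * q)"

definition crit_log :: "real \<Rightarrow> real \<Rightarrow> real \<Rightarrow> real" where
  "crit_log m q x = (q - 1) * ln x + q * ln (m + x) - (2 * q - 1) * ln (1 - x)"

lemma continuous_on_f45m:
  assumes "m > 0" "q > 0" "a > 0"
  shows "continuous_on {a..1} (f45m m q)"
  unfolding f45m_def using assms by (intro continuous_intros continuous_on_powr') auto

lemma f45m_has_real_derivative:
  assumes "m > 0" "0 < x" "x < 1"
  shows "(f45m m q has_real_derivative
     q * (m + (m + 2) * x) * (m + x) powr (m * q - 1)
       * (x powr (q - 1) * (m + x) powr q - (m + 1) * (1 - x) powr (2 * q - 1))) (at x)"
proof -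
  have "m + x > 0" "1 - x > 0" using assms by auto
  have deriv: "(f45m m q has_real_derivative
      q * x powr (q - 1) * (m + x) powr ((m + 1) * q)
      + x powr q * ((m + 1) * q * (m + x) powr ((m + 1) * q - 1))
      - (m + 1) * 2 * q * (1 - x) powr (2 * q - 1) * (m + x) powr (m * q)
      + (m + 1) * (1 - x) powr (2 * q) * (m * q * (m + x) powr (m * q - 1))) (at x)"
    unfolding f45m_def[abs_def] using \<open>0 < x\<close> \<open>m + x > 0\<close> \<open>1 - x > 0\<close>
    by (auto intro!: derivative_eq_intros simp: algebra_simps)
  have "x powr (q - 1) = x powr q / x"
    and "(m + x) powr (m * q - 1) = (m + x) powr (m * q) / (m + x)"
    and "(m + x) powr ((m + 1) * q - 1) = (m + x) powr (m * q) * (m + x) powr q / (m + x)"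
    and "(m + x) powr ((m + 1) * q) = (m + x) powr (m * q) * (m + x) powr q"
    and "(1 - x) powr (2 * q - 1) = (1 - x) powr (2 * q) / (1 - x)"
    using \<open>0 < x\<close> \<open>m + x > 0\<close> \<open>1 - x > 0\<close>
    by (simp_all add: powr_diff powr_add[symmetric] algebra_simps)
  note powr_shifts = this
  show ?thesis
  proof (rule DERIV_cong[OF deriv])
    show "q * x powr (q - 1) * (m + x) powr ((m + 1) * q)
      + x powr q * ((m + 1) * q * (m + x) powr ((m + 1) * q - 1))
      - (m + 1) * 2 * q * (1 - x) powr (2 * q - 1) * (m + x) powr (m * q)
      + (m + 1) * (1 - x) powr (2 * q) * (m * q * (m + x) powr (m * q - 1))
      = q * (m + (m + 2) * x) * (m + x) powr (m * q - 1)
       * (x powr (q - 1) * (m + x) powr q - (m + 1) * (1 - x) powr (2 * q - 1))"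
      using \<open>0 < x\<close> \<open>m + x > 0\<close> \<open>1 - x > 0\<close>
      unfolding powr_shifts by (simp add: divide_simps) (simp add: algebra_simps)
  qed
qed

lemma f45m_deriv_sgn:
  assumes "m > 0" "q > 0" "0 < x" "x < 1"
  obtains D where "(f45m m q has_real_derivative D) (at x)"
    and "sgn D = sgn (crit_log m q x - ln (m + 1))"
proof
  have "m + x > 0" "1 - x > 0" using assms by auto
  define G where "G = x powr (q - 1) * (m + x) powr q"
  define H where "H = (m + 1) * (1 - x) powr (2 * q - 1)"
  have "G > 0" "H > 0"
    unfolding G_def H_def using \<open>0 < x\<close> \<open>m + x > 0\<close> \<open>1 - x > 0\<close> \<open>m > 0\<close> by auto
  have "ln G - ln H = crit_log m q x - ln (m + 1)"
    unfolding G_def H_def crit_log_def using \<open>0 < x\<close> \<open>m + x > 0\<close> \<open>1 - x > 0\<close> \<open>m > 0\<close>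
    by (simp add: ln_mult ln_powr)
  moreover have "sgn (q * (m + (m + 2) * x) * (m + x) powr (m * q - 1)) = 1"
    using assms by (simp add: add_pos_pos)
  ultimately show "sgn (q * (m + (m + 2) * x) * (m + x) powr (m * q - 1) * (G - H))
      = sgn (crit_log m q x - ln (m + 1))"
    using sgn_diff_eq_sgn_ln_diff[OF \<open>G > 0\<close> \<open>H > 0\<close>] by (simp only: sgn_mult mult_1)
  show "(f45m m q has_real_derivative
      q * (m + (m + 2) * x) * (m + x) powr (m * q - 1) * (G - H)) (at x)"
    unfolding G_def H_def using f45m_has_real_derivative assms by blast
qed

lemma crit_log_has_real_derivative:
  assumes "m > 0" "0 < x" "x < 1"
  shows "(crit_log m q has_real_derivative
     ((q - 1) * m + (2 * q - 1 + m * q) * x) * (1 / (x * (m + x) * (1 - x)))) (at x)"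
proof (rule DERIV_cong)
  show "(crit_log m q has_real_derivative
      (q - 1) * (1 / x) + q * (1 / (m + x)) - (2 * q - 1) * (- 1 / (1 - x))) (at x)"
    unfolding crit_log_def[abs_def] using assms
    by (auto intro!: derivative_eq_intros)
  show "(q - 1) * (1 / x) + q * (1 / (m + x)) - (2 * q - 1) * (- 1 / (1 - x))
      = ((q - 1) * m + (2 * q - 1 + m * q) * x) * (1 / (x * (m + x) * (1 - x)))"
    using assms by (simp add: divide_simps) (simp add: algebra_simps)
qed

lemma crit_log_le_max:
  assumes "m > 0" "1 / 2 < q" "0 < a" "a \<le> y" "y \<le> c" "c < 1"
  shows "crit_log m q y \<le> max (crit_log m q a) (crit_log m q c)"
proof (rule le_max_if_deriv_eq_pos_mult_mono[OF \<open>a \<le> y\<close> \<open>y \<le> c\<close>])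
  show "(crit_log m q has_real_derivative
      ((q - 1) * m + (2 * q - 1 + m * q) * x) * (1 / (x * (m + x) * (1 - x)))) (at x)"
    if "a \<le> x" "x \<le> c" for x
    using crit_log_has_real_derivative assms that by simp
  show "1 / (x * (m + x) * (1 - x)) > 0" if "a \<le> x" "x \<le> c" for x
    using assms that by simp
  have "2 * q - 1 + m * q > 0"
    using assms by (simp add: add_pos_pos)
  then show "mono_on {a..c} (\<lambda>x. (q - 1) * m + (2 * q - 1 + m * q) * x)"
    by (auto intro!: mono_onI)
qed

lemma crit_log_at_inverse:
  assumes "m > 0"
  shows "crit_log m q (1 / (m + 2)) = ln (m + 1)"
proof -
  have "m + 1 / (m + 2) = (m + 1) ^ 2 / (m + 2)" "1 - 1 / (m + 2) = (m + 1) / (m + 2)"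
    using assms by (simp_all add: field_simps power2_eq_square)
  then have ln_eqs: "ln (m + 1 / (m + 2)) = 2 * ln (m + 1) - ln (m + 2)"
    "ln (1 - 1 / (m + 2)) = ln (m + 1) - ln (m + 2)"
    "ln (1 / (m + 2)) = - ln (m + 2)"
    using assms by (simp_all add: ln_div ln_realpow)
  show ?thesis
    unfolding crit_log_def ln_eqs by (simp add: algebra_simps)
qed

lemma f45m_interior_max_le_left:
  assumes "m > 0" "1 / 2 < q" "1 / (m + 2) < c" "c < 1"
    and max: "\<forall>y\<in>{1 / (m + 2)..1}. f45m m q y \<le> f45m m q c"
  shows "f45m m q c \<le> f45m m q (1 / (m + 2))"
proof -
  define a where "a = 1 / (m + 2)"
  have "0 < a" "a < c" "q > 0" using assms unfolding a_def by auto
  then have "0 < c" by linarith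
  obtain D where D: "(f45m m q has_real_derivative D) (at c)"
    and sgn_D: "sgn D = sgn (crit_log m q c - ln (m + 1))"
    by (rule f45m_deriv_sgn[OF \<open>m > 0\<close> \<open>q > 0\<close> \<open>0 < c\<close> \<open>c < 1\<close>])
  have "D = 0"
  proof (rule DERIV_local_max[OF D])
    show "0 < min (c - a) (1 - c)" using \<open>a < c\<close> \<open>c < 1\<close> by simp
    show "\<forall>y. \<bar>c - y\<bar> < min (c - a) (1 - c) \<longrightarrow> f45m m q y \<le> f45m m q c"
      using max unfolding a_def[symmetric] by (auto simp: abs_if split: if_splits)
  qed
  with sgn_D have "crit_log m q c = ln (m + 1)"
    by (simp add: sgn_0_0)
  moreover have "crit_log m q a = ln (m + 1)"
    unfolding a_def using crit_log_at_inverse \<open>m > 0\<close> .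
  ultimately have crit_log_le: "crit_log m q y \<le> ln (m + 1)" if "a \<le> y" "y \<le> c" for y
    using crit_log_le_max[OF \<open>m > 0\<close> \<open>1 / 2 < q\<close> \<open>0 < a\<close> that \<open>c < 1\<close>] by simp
  show ?thesis
    unfolding a_def[symmetric]
  proof (rule DERIV_nonpos_imp_nonincreasing[OF less_imp_le[OF \<open>a < c\<close>]])
    fix y assume "a \<le> y" "y \<le> c"
    then have "0 < y" "y < 1" using \<open>0 < a\<close> \<open>c < 1\<close> by auto
    then obtain D' where "(f45m m q has_real_derivative D') (at y)"
      and "sgn D' = sgn (crit_log m q y - ln (m + 1))"
      using f45m_deriv_sgn \<open>m > 0\<close> \<open>q > 0\<close> by blast
    moreover have "crit_log m q y \<le> ln (m + 1)"
      using crit_log_le \<open>a \<le> y\<close> \<open>y \<le> c\<close> .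
    ultimately show "\<exists>d. (f45m m q has_real_derivative d) (at y) \<and> d \<le> 0"
      by (metis sgn_le_0_iff diff_le_0_iff_le)
  qed
qed

theorem f45m_max_at_endpoint:
  assumes "m > 0" "1 / 2 < q"
  shows "(\<forall>x\<in>{1 / (m + 2)..1}. f45m m q x \<le> f45m m q (1 / (m + 2)))
       \<or> (\<forall>x\<in>{1 / (m + 2)..1}. f45m m q x \<le> f45m m q 1)"
proof (rule max_at_endpoint_if_interior_max_le_left)
  show "1 / (m + 2) \<le> 1" and "continuous_on {1 / (m + 2)..1} (f45m m q)"
    using assms by (auto intro: continuous_on_f45m)
  show "f45m m q c \<le> f45m m q (1 / (m + 2))"
    if "1 / (m + 2) < c" "c < 1" "\<forall>y\<in>{1 / (m + 2)..1}. f45m m q y \<le> f45m m q c" for c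
    using f45m_interior_max_le_left assms that by blast
qed

theorem lemma4p5:
  fixes k :: nat and q :: real
  assumes "k \<ge> 3" and "1/2 < q" and "q < 1"
  shows "(\<forall>x\<in>{1 / real k..1}. f45 k q x \<le> f45 k q (1 / real k))
       \<or> (\<forall>x\<in>{1 / real k..1}. f45 k q x \<le> f45 k q 1)"
proof -
  define m where "m = real k - 2"
  have "m > 0" using assms(1) unfolding m_def by simp
  have casts: "real (k - 1) = m + 1" "real (k - 2) = m" "real k = m + 2"
    using assms(1) unfolding m_def by (auto simp: of_nat_diff)
  have "f45 k q x = f45m m q x" for x
    unfolding f45_def f45m_def casts by simp
  then show ?thesis
    using f45m_max_at_endpoint[OF \<open>m > 0\<close> assms(2)] \<open>real k = m + 2\<close> by simp
qed

end
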